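(* Let $g$ be a generator satisfying (H1a) ${\rm d}P\times{\rm d}t$-a.e., for each $(y_0,z_0)\in\mathbb{R}^{1+d}$, $\lim_{(y,z)\to(y_0^-,z_0)}g(\omega,t,y,z)=g(\omega,t,y_0,z_0)$ and $\liminf_{(y,z)\to(y_0^+,z_0)}g(\omega,t,y,z)\ge g(\omega,t,y_0,z_0)$; and (H5) there are constants $C>0$, $\alpha\in(0,1)$ and a nonnegative progressively measurable process $(f_t)\in L^1([0,T]\times\Omega)$ such that ${\rm d}P\times{\rm d}t$-a.e., $|g(\omega,t,y,z)|\le f_t(\omega)+C(|y|+|z|^\alpha)$ for all $(y,z)$. For $n\ge1$ define $g_n(\omega,t,y,z):=\inf_{(u,v)\in\mathbb{Q}^{1+d}}\{g(\omega,t,u,v)+nC(|y-u|+|z-v|^\alpha)\}$, with $C,\alpha$ from (H5). Then: (i) for each $n\ge1$, $g_n$ maps $\Omega\times[0,T]\times\mathbb{R}\times\mathbb{R}^d$ into $\mathbb{R}$, and for each $(y,z)$, $g_n(\cdot,\cdot,y,z)$ is $(\mathcal{F}_t)$-progressively measurable; (ii) for each $n\ge1$ and each $(y,z)$, ${\rm d}P\times{\rm d}t$-a.e., $g_n(\omega,t,y,z)\le g_{n+1}(\omega,t,y,z)\le g(\omega,t,y,z)$ and $|g_n(\omega,t,y,z)|\le f_t(\omega)+C(|y|+|z|^\alpha)$; (iii) for each $y_1,y_2,z_1,z_2$, ${\rm d}P\times{\rm d}t$-a.e., $|g_n(\omega,t,y_1,z_1)-g_n(\omega,t,y_2,z_2)|\le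 nC(|y_1-y_2|+|z_1-z_2|^\alpha)$; (iv) if $(y_n,z_n)\to(y_0^-,z_0)$ as $n\to\infty$, then $\lim_{n\to\infty}g_n(\omega,t,y_n,z_n)=g(\omega,t,y_0,z_0)$ ${\rm d}P\times{\rm d}t$-a.e.
   Context: $T>0$, $d\ge1$; $(\Omega,\mathcal{F},P)$ complete probability space with standard $d$-dimensional Brownian motion and augmented natural filtration $(\mathcal{F}_t)$. A generator is a map $g:\Omega\times[0,T]\times\mathbb{R}\times\mathbb{R}^d\to\mathbb{R}$, $(\mathcal{F}_t)$-progressively measurable for each $(y,z)$. The notation $(y,z)\to(y_0^-,z_0)$ (resp. $(y_0^+,z_0)$) means $y\to y_0$ with $y<y_0$ (resp. $y>y_0$) and $z\to z_0$. *)

theory Defs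
  imports "HOL-Probability.Probability"
begin

definition filtration_on :: "'a measure \<Rightarrow> real \<Rightarrow> (real \<Rightarrow> 'a measure) \<Rightarrow> bool" where
  "filtration_on M T F \<longleftrightarrow>
     (\<forall>t\<in>{0..T}. space (F t) = space M \<and> sets (F t) \<subseteq> sets M) \<and>
     (\<forall>s t. 0 \<le> s \<longrightarrow> s \<le> t \<longrightarrow> t \<le> T \<longrightarrow> sets (F s) \<subseteq> sets (F t))"

definition complete_space_measure :: "'a measure \<Rightarrow> bool" where
  "complete_space_measure M \<longleftrightarrow>
     (\<forall>A B. B \<in> sets M \<longrightarrow> emeasure M B = 0 \<longrightarrow> A \<subseteq> B \<longrightarrow> A \<in> sets M)"

definition time_interval :: "real \<Rightarrow> real measure" where
  "time_interval T = restrict_space lborel {0..T}"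

definition progressive ::
  "real \<Rightarrow> (real \<Rightarrow> 'a measure) \<Rightarrow> ('a \<Rightarrow> real \<Rightarrow> 'b::topological_space) \<Rightarrow> bool" where
  "progressive T F X \<longleftrightarrow>
     (\<forall>t\<in>{0..T}. (\<lambda>(\<omega>, s). X \<omega> s) \<in> borel_measurable (F t \<Otimes>\<^sub>M restrict_space lborel {0..t}))"

definition gen_approx ::
  "real \<Rightarrow> real \<Rightarrow> ('a \<Rightarrow> real \<Rightarrow> real \<Rightarrow> real ^ 'd \<Rightarrow> real) \<Rightarrow> nat
     \<Rightarrow> 'a \<Rightarrow> real \<Rightarrow> real \<Rightarrow> real ^ 'd \<Rightarrow> ereal" where
  "gen_approx C \<alpha> g n \<omega> t y z =
     (INF uv \<in> {(u, v). u \<in> \<rat> \<and> (\<forall>i. v $ i \<in> \<rat>)}.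
        ereal (g \<omega> t (fst uv) (snd uv)
               + real n * C * (\<bar>y - fst uv\<bar> + norm (z - snd uv) powr \<alpha>)))"

end

theory Submission
  imports Defs
begin

text \<open>For \<open>0 < \<alpha> \<le> 1\<close> the cost \<open>\<bar>y - u\<bar> + \<parallel>z - v\<parallel>\<^sup>\<alpha>\<close> satisfies the triangle inequality, so the
  inf-convolution \<open>g\<^sub>n\<close> of \<open>g\<close> with \<open>n C\<close> times this cost is \<open>n C\<close>-Lipschitz for it and increases
  with \<open>n\<close>; the linear growth bound on \<open>g\<close> bounds it from below, and approaching \<open>(y, z)\<close> by
  rational points from the left, where \<open>g\<close> is continuous, shows \<open>g\<^sub>n \<le> g\<close>.
  For the convergence, left continuity together with the \<open>Liminf\<close> condition from the right make \<open>g\<close>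
  lower semicontinuous: near \<open>(y\<^sub>0, z\<^sub>0)\<close> the values of \<open>g\<close> are almost \<open>\<ge> g(y\<^sub>0, z\<^sub>0)\<close>, while far
  points pay a penalty of order \<open>n\<close> that eventually beats the growth bound.\<close>

lemma powr_add_le:
  fixes a b \<alpha> :: real
  assumes "0 \<le> a" "0 \<le> b" "0 < \<alpha>" "\<alpha> \<le> 1"
  shows "(a + b) powr \<alpha> \<le> a powr \<alpha> + b powr \<alpha>"
proof (cases "a + b = 0")
  case True
  then show ?thesis using assms by simp
next
  case False
  hence s: "a + b > 0" using assms by simp
  have le_powr: "x \<le> x powr \<alpha>" if "0 \<le> x" "x \<le> 1" for x :: real
    using powr_mono'[of \<alpha> 1 x] that assms by simp
  have "(a + b) powr \<alpha> = (a + b) powr \<alpha> * (a / (a + b) + b / (a + b))"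
    using s by (simp add: add_divide_distrib[symmetric])
  also have "\<dots> \<le> (a + b) powr \<alpha> * ((a / (a + b)) powr \<alpha> + (b / (a + b)) powr \<alpha>)"
    using assms s by (intro mult_left_mono add_mono le_powr) auto
  also have "\<dots> = a powr \<alpha> + b powr \<alpha>"
    using assms s by (simp add: powr_divide distrib_left)
  finally show ?thesis .
qed

definition hdist :: "real \<Rightarrow> real \<Rightarrow> 'b::real_normed_vector \<Rightarrow> real \<Rightarrow> 'b \<Rightarrow> real" where
  "hdist \<alpha> y z u v = \<bar>y - u\<bar> + norm (z - v) powr \<alpha>"

lemma hdist_nonneg: "0 \<le> hdist \<alpha> y z u v"
  by (simp add: hdist_def)

lemma hdist_triangle:
  assumes "0 < \<alpha>" "\<alpha> \<le> 1"
  shows "hdist \<alpha> y z u v \<le> hdist \<alpha> y z y' z' + hdist \<alpha> y' z' u v"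
proof -
  have "norm (z - v) powr \<alpha> \<le> (norm (z - z') + norm (z' - v)) powr \<alpha>"
    using assms by (intro powr_mono2) (auto intro: norm_diff_triangle_le)
  also have "\<dots> \<le> norm (z - z') powr \<alpha> + norm (z' - v) powr \<alpha>"
    using assms by (intro powr_add_le) auto
  finally show ?thesis
    unfolding hdist_def by linarith
qed

definition rat_grid :: "(real \<times> (real ^ 'd)) set" where
  "rat_grid = {(u, v). u \<in> \<rat> \<and> (\<forall>i. v $ i \<in> \<rat>)}"

lemma zero_in_rat_grid: "(0, 0) \<in> rat_grid"
  by (simp add: rat_grid_def)

lemma countable_rat_grid: "countable (rat_grid :: (real \<times> (real ^ 'd)) set)"
proof -
  let ?emb = "\<lambda>(q :: rat, w :: rat ^ 'd). (of_rat q :: real, \<chi> i. (of_rat (w $ i) :: real))"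
  have "rat_grid \<subseteq> range ?emb"
  proof
    fix x :: "real \<times> (real ^ 'd)"
    assume "x \<in> rat_grid"
    then obtain u v where x: "x = (u, v)" "u \<in> \<rat>" "\<And>i. v $ i \<in> \<rat>"
      by (auto simp: rat_grid_def)
    obtain q where "u = of_rat q"
      using x(2) Rats_cases by metis
    moreover have "\<forall>i. \<exists>r. v $ i = of_rat r"
      using x(3) Rats_cases by metis
    then obtain w where "\<And>i. v $ i = of_rat (w i)"
      by metis
    ultimately have "x = ?emb (q, \<chi> i. w i)"
      using x by (simp add: vec_eq_iff)
    thus "x \<in> range ?emb" by blast
  qed
  thus ?thesis by (rule countable_subset) simp
qed

lemma rat_grid_approx_left:
  fixes y :: real and z :: "real ^ 'd"
  assumes "e > 0"
  obtains u v where "(u, v) \<in> rat_grid" "u < y" "y - e < u" "norm (z - v) < e"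
proof -
  obtain u where u: "u \<in> \<rat>" "y - e < u" "u < y"
    using Rats_dense_in_real[of "y - e" y] assms by auto
  define e' where "e' = e / real CARD('d)"
  have e': "e' > 0" using assms by (simp add: e'_def)
  have "\<forall>i. \<exists>r\<in>\<rat>. z $ i - e' < r \<and> r < z $ i"
    using Rats_dense_in_real[of "z $ _ - e'" "z $ _"] e' by simp
  then obtain w where w: "\<And>i. w i \<in> \<rat>" "\<And>i. z $ i - e' < w i" "\<And>i. w i < z $ i"
    by metis
  define v where "v = (\<chi> i. w i)"
  have "norm (z - v) \<le> (\<Sum>i\<in>UNIV. \<bar>(z - v) $ i\<bar>)"
    by (rule norm_le_l1_cart)
  also have "\<dots> < (\<Sum>i\<in>(UNIV :: 'd set). e')"
  proof (intro sum_strict_mono)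
    fix i :: 'd
    show "\<bar>(z - v) $ i\<bar> < e'"
      using w(2,3)[of i] by (simp add: v_def abs_less_iff)
  qed auto
  also have "\<dots> = e"
    by (simp add: e'_def)
  finally have "norm (z - v) < e" .
  moreover have "(u, v) \<in> rat_grid"
    using u w by (simp add: rat_grid_def v_def)
  ultimately show ?thesis
    using that u by blast
qed

lemma rat_grid_sequence_left:
  fixes y :: real and z :: "real ^ 'd"
  obtains uu vv where "\<And>k. (uu k, vv k) \<in> rat_grid" "\<And>k. uu k < y"
    "uu \<longlonglongrightarrow> y" "vv \<longlonglongrightarrow> z"
proof -
  have "\<forall>k::nat. \<exists>u v. (u, v) \<in> rat_grid \<and> u < y \<and> y - 1 / Suc k < u \<and> norm (z - v) < 1 / Suc k"
  proof
    fix k :: nat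
    show "\<exists>u v. (u, v) \<in> rat_grid \<and> u < y \<and> y - 1 / Suc k < u \<and> norm (z - v) < 1 / Suc k"
      using rat_grid_approx_left[of "1 / Suc k" y z] by fastforce
  qed
  then obtain uu vv where uv: "\<And>k. (uu k, vv k) \<in> rat_grid" "\<And>k. uu k < y"
    "\<And>k. y - 1 / Suc k < uu k" "\<And>k. norm (z - vv k) < 1 / Suc k"
    by metis
  have inv: "(\<lambda>k. 1 / real (Suc k)) \<longlonglongrightarrow> 0"
    by (rule LIMSEQ_inverse_real_of_nat[unfolded inverse_eq_divide])
  have dist_le: "dist (uu k) y \<le> 1 / Suc k" "dist (vv k) z \<le> 1 / Suc k" for k
  proof -
    show "dist (uu k) y \<le> 1 / Suc k"
      using uv(2,3)[of k] unfolding dist_real_def by linarith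
    show "dist (vv k) z \<le> 1 / Suc k"
      using uv(4)[of k] by (metis dist_commute dist_norm less_imp_le)
  qed
  have "uu \<longlonglongrightarrow> y" "vv \<longlonglongrightarrow> z"
    using dist_le by (auto intro!: tendsto_sandwich[OF _ _ tendsto_const inv] always_eventually
        simp: tendsto_dist_iff[of uu] tendsto_dist_iff[of vv])
  with that uv(1,2) show ?thesis .
qed

definition inf_conv ::
    "real \<Rightarrow> real \<Rightarrow> (real \<Rightarrow> real ^ 'd \<Rightarrow> real) \<Rightarrow> nat \<Rightarrow> real \<Rightarrow> real ^ 'd \<Rightarrow> ereal" where
  "inf_conv C \<alpha> G n y z = (INF (u, v) \<in> rat_grid. ereal (G u v + real n * C * hdist \<alpha> y z u v))"

lemma gen_approx_eq_inf_conv: "gen_approx C \<alpha> g n \<omega> t y z = inf_conv C \<alpha> (g \<omega> t) n y z"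
  by (simp add: gen_approx_def inf_conv_def rat_grid_def hdist_def case_prod_unfold)

lemma inf_conv_le:
  "(u, v) \<in> rat_grid \<Longrightarrow> inf_conv C \<alpha> G n y z \<le> ereal (G u v + real n * C * hdist \<alpha> y z u v)"
  unfolding inf_conv_def by (rule INF_lower2) auto

lemma inf_conv_neq_PInf: "inf_conv C \<alpha> G n y z \<noteq> \<infinity>"
  using inf_conv_le[OF zero_in_rat_grid, of C \<alpha> G n y z] by auto

lemma inf_conv_mono:
  assumes "0 \<le> C" "n \<le> m"
  shows "inf_conv C \<alpha> G n y z \<le> inf_conv C \<alpha> G m y z"
  unfolding inf_conv_def
proof (rule INF_mono', clarify)
  fix u v
  have "real n * C * hdist \<alpha> y z u v \<le> real m * C * hdist \<alpha> y z u v"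
    using assms hdist_nonneg by (intro mult_right_mono) auto
  then show "ereal (G u v + real n * C * hdist \<alpha> y z u v)
      \<le> ereal (G u v + real m * C * hdist \<alpha> y z u v)"
    by simp
qed

lemma inf_conv_le_left_continuous:
  assumes LC: "((\<lambda>(u, v). G u v) \<longlongrightarrow> G y z) (at (y, z) within {..<y} \<times> UNIV)"
    and "0 < \<alpha>"
  shows "inf_conv C \<alpha> G n y z \<le> ereal (G y z)"
proof -
  obtain uu vv where grid: "\<And>k. (uu k, vv k) \<in> rat_grid" and left: "\<And>k. uu k < y"
    and uu: "uu \<longlonglongrightarrow> y" and vv: "vv \<longlonglongrightarrow> z"
    using rat_grid_sequence_left[of y z] by blast
  have "filterlim (\<lambda>k. (uu k, vv k)) (at (y, z) within {..<y} \<times> UNIV) sequentially"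
    unfolding filterlim_at using left
    by (auto intro!: tendsto_Pair uu vv always_eventually simp: less_imp_neq)
  with LC have G_lim: "(\<lambda>k. G (uu k) (vv k)) \<longlonglongrightarrow> G y z"
    by (auto dest: filterlim_compose)
  have "(\<lambda>k. \<bar>y - uu k\<bar>) \<longlonglongrightarrow> 0" "(\<lambda>k. norm (z - vv k)) \<longlonglongrightarrow> 0"
    using tendsto_rabs[OF tendsto_diff[OF tendsto_const[of y] uu]]
      tendsto_norm[OF tendsto_diff[OF tendsto_const[of z] vv]] by simp_all
  then have hdist_lim: "(\<lambda>k. hdist \<alpha> y z (uu k) (vv k)) \<longlonglongrightarrow> 0"
    unfolding hdist_def using \<open>0 < \<alpha>\<close>
    by (intro tendsto_add_zero tendsto_zero_powrI) auto
  have "(\<lambda>k. ereal (G (uu k) (vv k) + real n * C * hdist \<alpha> y z (uu k) (vv k)))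
      \<longlonglongrightarrow> ereal (G y z)"
    unfolding lim_ereal using tendsto_add[OF G_lim tendsto_mult_left[OF hdist_lim, of "real n * C"]]
    by simp
  then show ?thesis
    by (rule LIMSEQ_le_const) (use inf_conv_le[OF grid] in blast)
qed

lemma growth_bound_plus_penalty:
  fixes G :: "real \<Rightarrow> 'b::real_normed_vector \<Rightarrow> real"
  assumes B: "\<bar>G u v\<bar> \<le> \<phi> + C * (\<bar>u\<bar> + norm v powr \<alpha>)"
    and "0 \<le> C" "0 < \<alpha>" "\<alpha> \<le> 1"
  shows "(c - 1) * C * hdist \<alpha> y z u v - (\<phi> + C * (\<bar>y\<bar> + norm z powr \<alpha>))
           \<le> G u v + c * C * hdist \<alpha> y z u v"
proof -
  have "\<bar>u\<bar> + norm v powr \<alpha> \<le> (\<bar>y\<bar> + norm z powr \<alpha>) + hdist \<alpha> y z u v"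
    using hdist_triangle[OF assms(3,4), of 0 0 u v y z] by (simp add: hdist_def)
  then have "C * (\<bar>u\<bar> + norm v powr \<alpha>) \<le> C * (\<bar>y\<bar> + norm z powr \<alpha>) + C * hdist \<alpha> y z u v"
    using mult_left_mono[OF _ \<open>0 \<le> C\<close>] by (fastforce simp: distrib_left)
  then show ?thesis
    using B by (simp add: algebra_simps)
qed

lemma inf_conv_ge_growth_bound:
  assumes B: "\<And>u v. \<bar>G u v\<bar> \<le> \<phi> + C * (\<bar>u\<bar> + norm v powr \<alpha>)"
    and "0 \<le> C" "0 < \<alpha>" "\<alpha> \<le> 1" "1 \<le> n"
  shows "ereal (- (\<phi> + C * (\<bar>y\<bar> + norm z powr \<alpha>))) \<le> inf_conv C \<alpha> G n y z"
  unfolding inf_conv_def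
proof (rule INF_greatest, clarify)
  fix u v
  have "0 \<le> (real n - 1) * C * hdist \<alpha> y z u v"
    using assms(2,5) by (simp add: hdist_nonneg)
  then show "ereal (- (\<phi> + C * (\<bar>y\<bar> + norm z powr \<alpha>)))
      \<le> ereal (G u v + real n * C * hdist \<alpha> y z u v)"
    using growth_bound_plus_penalty[where G = G and u = u and v = v and c = "real n" and y = y and z = z,
        OF B assms(2-4)]
    by simp
qed

lemma inf_conv_neq_MInf:
  assumes "\<And>u v. \<bar>G u v\<bar> \<le> \<phi> + C * (\<bar>u\<bar> + norm v powr \<alpha>)"
    and "0 \<le> C" "0 < \<alpha>" "\<alpha> \<le> 1" "1 \<le> n"
  shows "inf_conv C \<alpha> G n y z \<noteq> - \<infinity>"
  using inf_conv_ge_growth_bound[OF assms, of y z] by auto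

lemma inf_conv_abs_le:
  assumes LC: "((\<lambda>(u, v). G u v) \<longlongrightarrow> G y z) (at (y, z) within {..<y} \<times> UNIV)"
    and B: "\<And>u v. \<bar>G u v\<bar> \<le> \<phi> + C * (\<bar>u\<bar> + norm v powr \<alpha>)"
    and "0 \<le> C" "0 < \<alpha>" "\<alpha> \<le> 1" "1 \<le> n"
  shows "\<bar>inf_conv C \<alpha> G n y z\<bar> \<le> ereal (\<phi> + C * (\<bar>y\<bar> + norm z powr \<alpha>))"
  using inf_conv_ge_growth_bound[OF B assms(3-6), of y z]
    inf_conv_le_left_continuous[OF LC \<open>0 < \<alpha>\<close>, of C n] B[of y z]
  by (cases "inf_conv C \<alpha> G n y z") auto

lemma inf_conv_le_shift:
  fixes G :: "real \<Rightarrow> real ^ 'd \<Rightarrow> real"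
  assumes "0 \<le> C" "0 < \<alpha>" "\<alpha> \<le> 1"
  shows "inf_conv C \<alpha> G n y z \<le> inf_conv C \<alpha> G n y' z' + ereal (real n * C * hdist \<alpha> y z y' z')"
proof -
  let ?L = "real n * C * hdist \<alpha> y z y' z'"
  have "inf_conv C \<alpha> G n y z - ereal ?L \<le> inf_conv C \<alpha> G n y' z'"
    unfolding inf_conv_def [of C \<alpha> G n y' z']
  proof (rule INF_greatest, clarify)
    fix u and v :: "real ^ 'd"
    assume "(u, v) \<in> rat_grid"
    then have "inf_conv C \<alpha> G n y z \<le> ereal (G u v + real n * C * hdist \<alpha> y z u v)"
      by (rule inf_conv_le)
    also have "\<dots> \<le> ereal (G u v + real n * C * hdist \<alpha> y' z' u v + ?L)"
      using mult_left_mono[OF hdist_triangle[OF assms(2,3), of y z u v y' z'], of "real n * C"] assms(1)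
      by (simp add: distrib_left)
    finally show "inf_conv C \<alpha> G n y z - ereal ?L \<le> ereal (G u v + real n * C * hdist \<alpha> y' z' u v)"
      by (cases "inf_conv C \<alpha> G n y z") auto
  qed
  then show ?thesis
    by (cases "inf_conv C \<alpha> G n y z"; cases "inf_conv C \<alpha> G n y' z'") auto
qed

lemma inf_conv_abs_diff_le:
  assumes B: "\<And>u v. \<bar>G u v\<bar> \<le> \<phi> + C * (\<bar>u\<bar> + norm v powr \<alpha>)"
    and "0 \<le> C" "0 < \<alpha>" "\<alpha> \<le> 1" "1 \<le> n"
  shows "\<bar>inf_conv C \<alpha> G n y z - inf_conv C \<alpha> G n y' z'\<bar>
           \<le> ereal (real n * C * (\<bar>y - y'\<bar> + norm (z - z') powr \<alpha>))"
proof -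
  have "inf_conv C \<alpha> G n y z \<noteq> - \<infinity>" "inf_conv C \<alpha> G n y' z' \<noteq> - \<infinity>"
    by (rule inf_conv_neq_MInf[OF B assms(2-5)])+
  moreover have "inf_conv C \<alpha> G n y z \<noteq> \<infinity>" "inf_conv C \<alpha> G n y' z' \<noteq> \<infinity>"
    by (rule inf_conv_neq_PInf)+
  moreover note inf_conv_le_shift[OF assms(2-4), of G n y z y' z']
    inf_conv_le_shift[OF assms(2-4), of G n y' z' y z]
  ultimately show ?thesis
    unfolding hdist_def
    by (cases "inf_conv C \<alpha> G n y z"; cases "inf_conv C \<alpha> G n y' z'")
      (auto simp: abs_minus_commute norm_minus_commute)
qed

lemma dist_Pair_le: "dist (u, v) (y, z) \<le> \<bar>u - y\<bar> + dist v z"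
  for u y :: real
  using sqrt_sum_squares_le_sum_abs[of "dist u y" "dist v z"]
  by (simp add: dist_Pair_Pair dist_real_def)

lemma lower_semicontinuous_one_sided:
  fixes G :: "real \<Rightarrow> 'b::real_normed_vector \<Rightarrow> real"
  assumes LC: "\<And>y z. ((\<lambda>(u, v). G u v) \<longlongrightarrow> G y z) (at (y, z) within {..<y} \<times> UNIV)"
    and RL: "ereal (G y0 z0) \<le> Liminf (at (y0, z0) within {y0<..} \<times> UNIV) (\<lambda>(u, v). ereal (G u v))"
    and "e > 0"
  obtains \<delta> where "\<delta> > 0"
    "\<And>u v. \<bar>u - y0\<bar> < \<delta> \<Longrightarrow> norm (v - z0) < \<delta> \<Longrightarrow> G y0 z0 - e < G u v"
proof -
  have "\<forall>\<^sub>F x in at (y0, z0) within {..<y0} \<times> UNIV.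
      dist ((\<lambda>(u, v). G u v) x) (G y0 z0) < e / 2"
    using LC[of y0 z0] \<open>e > 0\<close> unfolding tendsto_iff by (meson half_gt_zero)
  then obtain d1 where "d1 > 0" and d1: "\<And>u v. u < y0 \<Longrightarrow> dist (u, v) (y0, z0) < d1
      \<Longrightarrow> dist (G u v) (G y0 z0) < e / 2"
    unfolding eventually_at by auto
  have "ereal (G y0 z0 - e) < ereal (G y0 z0)"
    using \<open>e > 0\<close> by simp
  with RL have "\<forall>\<^sub>F x in at (y0, z0) within {y0<..} \<times> UNIV.
      ereal (G y0 z0 - e) < (\<lambda>(u, v). ereal (G u v)) x"
    unfolding le_Liminf_iff by blast
  then obtain d2 where "d2 > 0" and d2: "\<And>u v. y0 < u \<Longrightarrow> dist (u, v) (y0, z0) < d2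
      \<Longrightarrow> G y0 z0 - e < G u v"
    unfolding eventually_at by auto
  define \<delta> where "\<delta> = min d1 d2 / 2"
  have "\<delta> > 0"
    using \<open>d1 > 0\<close> \<open>d2 > 0\<close> by (simp add: \<delta>_def)
  have close: "dist (u, v) (y0, z0) < min d1 d2" if "\<bar>u - y0\<bar> < \<delta>" "norm (v - z0) < \<delta>" for u v
    using dist_Pair_le[of u v y0 z0] that by (simp add: \<delta>_def dist_norm)
  have left: "G y0 z0 - e / 2 < G u v" if "u < y0" "\<bar>u - y0\<bar> < \<delta>" "norm (v - z0) < \<delta>" for u v
    using d1[OF \<open>u < y0\<close>, of v] close[OF that(2,3)] unfolding dist_real_def by linarith
  have "G y0 z0 - e < G u v" if "\<bar>u - y0\<bar> < \<delta>" "norm (v - z0) < \<delta>" for u v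
  proof (cases u y0 rule: linorder_cases)
    case less
    then show ?thesis using left[OF less that] \<open>e > 0\<close> by linarith
  next
    case greater
    then show ?thesis using d2 close[OF that] by simp
  next
    case equal
    have "filterlim (\<lambda>w. (w, v)) (at (y0, v) within {..<y0} \<times> UNIV) (at_left y0)"
      unfolding filterlim_at by (auto intro!: tendsto_eq_intros simp: eventually_at_filter)
    with LC[of y0 v] have "((\<lambda>w. G w v) \<longlongrightarrow> G y0 v) (at_left y0)"
      by (auto dest: filterlim_compose)
    moreover have "\<forall>\<^sub>F w in at_left y0. G y0 z0 - e / 2 \<le> G w v"
    proof -
      have "\<forall>\<^sub>F w in at_left y0. w \<in> {y0 - \<delta><..<y0}"
        using \<open>\<delta> > 0\<close> by (intro eventually_at_left_real) simp
      then show ?thesis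
        by eventually_elim (use left that(2) in \<open>auto intro: less_imp_le\<close>)
    qed
    ultimately have "G y0 z0 - e / 2 \<le> G y0 v"
      by (rule tendsto_lowerbound) simp
    then show ?thesis
      using equal \<open>e > 0\<close> by simp
  qed
  with \<open>\<delta> > 0\<close> show ?thesis
    using that by blast
qed

lemma hdist_ge_if_far:
  fixes z z0 v :: "'b::real_normed_vector"
  assumes "0 < \<delta>" "0 < \<alpha>" "\<bar>y - y0\<bar> < \<delta> / 2" "norm (z - z0) < \<delta> / 2"
    and far: "\<not> (\<bar>u - y0\<bar> < \<delta> \<and> norm (v - z0) < \<delta>)"
  shows "min (\<delta> / 2) ((\<delta> / 2) powr \<alpha>) \<le> hdist \<alpha> y z u v"
proof (cases "\<bar>u - y0\<bar> < \<delta>")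
  case False
  then have "\<delta> / 2 \<le> \<bar>y - u\<bar>"
    using assms(3) by linarith
  then show ?thesis
    unfolding hdist_def by (simp add: add_increasing2 min.coboundedI1)
next
  case True
  with far have "\<delta> \<le> norm (v - z0)"
    by simp
  moreover have "norm (v - z0) \<le> norm (z - v) + norm (z - z0)"
    using norm_triangle_ineq4[of "v - z" "z0 - z"] by (simp add: norm_minus_commute)
  ultimately have "(\<delta> / 2) powr \<alpha> \<le> norm (z - v) powr \<alpha>"
    using assms(1,2,4) by (intro powr_mono2) auto
  then show ?thesis
    unfolding hdist_def by (simp add: add_increasing min.coboundedI2)
qed

lemma penalty_dominates_growth_bound:
  fixes G :: "real \<Rightarrow> 'b::real_normed_vector \<Rightarrow> real"
  assumes B: "\<bar>G u v\<bar> \<le> \<phi> + C * (\<bar>u\<bar> + norm v powr \<alpha>)"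
    and "0 < C" "0 < \<alpha>" "\<alpha> \<le> 1" "1 \<le> c" "m \<le> hdist \<alpha> y z u v"
    and "\<phi> + C * (\<bar>y\<bar> + norm z powr \<alpha>) + K \<le> (c - 1) * C * m"
  shows "K \<le> G u v + c * C * hdist \<alpha> y z u v"
proof -
  have "(c - 1) * C * m \<le> (c - 1) * C * hdist \<alpha> y z u v"
    using assms(2,5,6) by (intro mult_left_mono) auto
  then show ?thesis
    using growth_bound_plus_penalty[where G = G and u = u and v = v and c = c and y = y and z = z, OF B]
      assms(2-4,7)
    by linarith
qed

lemma eventually_inf_conv_ge:
  fixes G :: "real \<Rightarrow> real ^ 'd \<Rightarrow> real"
  assumes LC: "\<And>y z. ((\<lambda>(u, v). G u v) \<longlongrightarrow> G y z) (at (y, z) within {..<y} \<times> UNIV)"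
    and RL: "ereal (G y0 z0) \<le> Liminf (at (y0, z0) within {y0<..} \<times> UNIV) (\<lambda>(u, v). ereal (G u v))"
    and B: "\<And>u v. \<bar>G u v\<bar> \<le> \<phi> + C * (\<bar>u\<bar> + norm v powr \<alpha>)"
    and "0 < C" "0 < \<alpha>" "\<alpha> \<le> 1" and yy: "yy \<longlonglongrightarrow> y0" and zz: "zz \<longlonglongrightarrow> z0" and "e > 0"
  shows "\<forall>\<^sub>F n in sequentially. ereal (G y0 z0 - e) \<le> inf_conv C \<alpha> G n (yy n) (zz n)"
proof -
  obtain \<delta> where "\<delta> > 0"
    and near: "\<And>u v. \<bar>u - y0\<bar> < \<delta> \<Longrightarrow> norm (v - z0) < \<delta> \<Longrightarrow> G y0 z0 - e < G u v"
    using lower_semicontinuous_one_sided[OF LC RL \<open>e > 0\<close>] by blast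
  define m where "m = min (\<delta> / 2) ((\<delta> / 2) powr \<alpha>)"
  define A where "A = \<phi> + C * (\<bar>y0\<bar> + 1 + (norm z0 + 1) powr \<alpha>) + \<bar>G y0 z0\<bar>"
  have "m > 0" using \<open>\<delta> > 0\<close> by (simp add: m_def)
  \<comment> \<open>\<open>N\<close> makes the penalty \<open>(n - 1) C m\<close> paid by points outside the \<open>\<delta>\<close>-box dominate the
    growth bound near \<open>(y\<^sub>0, z\<^sub>0)\<close>.\<close>
  obtain N :: nat where N: "A / (C * m) + 1 \<le> real N" "1 \<le> N"
    using real_arch_simple[of "max (A / (C * m) + 1) 1"] by auto
  let ?r = "min (\<delta> / 2) 1"
  have "?r > 0"
    using \<open>\<delta> > 0\<close> by simp
  then have "\<forall>\<^sub>F n in sequentially. dist (yy n) y0 < ?r" "\<forall>\<^sub>F n in sequentially. dist (zz n) z0 < ?r"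
    using yy zz unfolding tendsto_iff by blast+
  with eventually_ge_at_top[of N]
  show ?thesis
  proof eventually_elim
    case (elim n)
    then have yn: "\<bar>yy n - y0\<bar> < \<delta> / 2" "\<bar>yy n\<bar> \<le> \<bar>y0\<bar> + 1"
      and zn: "norm (zz n - z0) < \<delta> / 2" "norm (zz n) \<le> norm z0 + 1"
      using norm_triangle_sub[of "zz n" z0] by (auto simp: dist_real_def dist_norm)
    have "A / (C * m) \<le> real n - 1"
      using N(1) elim(1) by linarith
    then have A_le: "A \<le> (real n - 1) * C * m"
      using \<open>0 < C\<close> \<open>m > 0\<close> by (simp add: pos_divide_le_eq mult.assoc)
    have "G y0 z0 - e \<le> G u v + real n * C * hdist \<alpha> (yy n) (zz n) u v" for u v
    proof (cases "\<bar>u - y0\<bar> < \<delta> \<and> norm (v - z0) < \<delta>")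
      case True
      then show ?thesis
        using near[of u v] \<open>0 < C\<close> hdist_nonneg[of \<alpha> "yy n" "zz n" u v]
        by (smt (verit) mult_nonneg_nonneg of_nat_0_le_iff)
    next
      case False
      have "norm (zz n) powr \<alpha> \<le> (norm z0 + 1) powr \<alpha>"
        using zn(2) \<open>0 < \<alpha>\<close> by (intro powr_mono2) auto
      then have "C * (\<bar>yy n\<bar> + norm (zz n) powr \<alpha>) \<le> C * (\<bar>y0\<bar> + 1 + (norm z0 + 1) powr \<alpha>)"
        using yn(2) \<open>0 < C\<close> by (intro mult_left_mono) auto
      with A_le have "\<phi> + C * (\<bar>yy n\<bar> + norm (zz n) powr \<alpha>) + \<bar>G y0 z0\<bar> \<le> (real n - 1) * C * m"
        unfolding A_def by linarith
      moreover have "m \<le> hdist \<alpha> (yy n) (zz n) u v"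
        unfolding m_def using hdist_ge_if_far[OF \<open>\<delta> > 0\<close> \<open>0 < \<alpha>\<close> yn(1) zn(1) False] .
      ultimately have "\<bar>G y0 z0\<bar> \<le> G u v + real n * C * hdist \<alpha> (yy n) (zz n) u v"
        using elim(1) N(2)
        by (intro penalty_dominates_growth_bound[where G = G and u = u and v = v,
              OF B \<open>0 < C\<close> \<open>0 < \<alpha>\<close> \<open>\<alpha> \<le> 1\<close>]) auto
      then show ?thesis
        using \<open>e > 0\<close> by linarith
    qed
    then show ?case
      unfolding inf_conv_def by (auto intro: INF_greatest)
  qed
qed

lemma inf_conv_tendsto_from_left:
  fixes G :: "real \<Rightarrow> real ^ 'd \<Rightarrow> real"
  assumes LC: "\<And>y z. ((\<lambda>(u, v). G u v) \<longlongrightarrow> G y z) (at (y, z) within {..<y} \<times> UNIV)"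
    and RL: "ereal (G y0 z0) \<le> Liminf (at (y0, z0) within {y0<..} \<times> UNIV) (\<lambda>(u, v). ereal (G u v))"
    and B: "\<And>u v. \<bar>G u v\<bar> \<le> \<phi> + C * (\<bar>u\<bar> + norm v powr \<alpha>)"
    and "0 < C" "0 < \<alpha>" "\<alpha> \<le> 1"
    and left: "\<And>n. yy n < y0" and yy: "yy \<longlonglongrightarrow> y0" and zz: "zz \<longlonglongrightarrow> z0"
  shows "(\<lambda>n. inf_conv C \<alpha> G n (yy n) (zz n)) \<longlonglongrightarrow> ereal (G y0 z0)"
proof (rule order_tendstoI)
  fix a
  assume "a < ereal (G y0 z0)"
  then obtain r where r: "a < ereal r" "r < G y0 z0"
    using ereal_dense2 by (metis less_ereal.simps(1))
  with eventually_inf_conv_ge[OF LC RL B assms(4-6) yy zz, of "G y0 z0 - r"]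
  show "\<forall>\<^sub>F n in sequentially. a < inf_conv C \<alpha> G n (yy n) (zz n)"
    by (auto elim: eventually_mono)
next
  fix a
  assume "ereal (G y0 z0) < a"
  have "filterlim (\<lambda>n. (yy n, zz n)) (at (y0, z0) within {..<y0} \<times> UNIV) sequentially"
    unfolding filterlim_at using left
    by (auto intro!: tendsto_Pair yy zz always_eventually simp: less_imp_neq)
  with LC[of y0 z0] have "(\<lambda>n. ereal (G (yy n) (zz n))) \<longlonglongrightarrow> ereal (G y0 z0)"
    unfolding lim_ereal by (auto dest: filterlim_compose)
  from order_tendstoD(2)[OF this \<open>ereal (G y0 z0) < a\<close>]
  show "\<forall>\<^sub>F n in sequentially. inf_conv C \<alpha> G n (yy n) (zz n) < a"
    by eventually_elim
      (use inf_conv_le_left_continuous[OF LC \<open>0 < \<alpha>\<close>] in \<open>blast intro: le_less_trans\<close>)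
qed

lemma progressive_inf_conv:
  assumes "\<And>u v. progressive T F (\<lambda>\<omega> t. g \<omega> t u v)"
  shows "progressive T F (\<lambda>\<omega> t. inf_conv C \<alpha> (g \<omega> t) n y z)"
  unfolding progressive_def
proof
  fix t assume "t \<in> {0..T}"
  then have "(\<lambda>x. g (fst x) (snd x) u v)
      \<in> borel_measurable (F t \<Otimes>\<^sub>M restrict_space lborel {0..t})" for u v
    using assms[of u v] by (simp add: progressive_def case_prod_unfold)
  then show "(\<lambda>(\<omega>, s). inf_conv C \<alpha> (g \<omega> s) n y z)
      \<in> borel_measurable (F t \<Otimes>\<^sub>M restrict_space lborel {0..t})"
    unfolding inf_conv_def case_prod_unfold
    by (intro borel_measurable_INF countable_rat_grid borel_measurable_ereal borel_measurable_add
        borel_measurable_const)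
qed

theorem proposition2:
  fixes M :: "'a measure" and F :: "real \<Rightarrow> 'a measure" and T :: real
    and g :: "'a \<Rightarrow> real \<Rightarrow> real \<Rightarrow> real ^ 'd \<Rightarrow> real"
    and f :: "'a \<Rightarrow> real \<Rightarrow> real" and C \<alpha> :: real
  assumes "prob_space M" and "complete_space_measure M" and "T > 0"
    and "filtration_on M T F"
    \<comment> \<open>g is a generator\<close>
    and gen: "\<And>y z. progressive T F (\<lambda>\<omega> t. g \<omega> t y z)"
    \<comment> \<open>(H1a)\<close>
    and H1a: "AE \<omega>t in M \<Otimes>\<^sub>M time_interval T.
       \<forall>y0 z0. ((\<lambda>(y, z). g (fst \<omega>t) (snd \<omega>t) y z) \<longlongrightarrow> g (fst \<omega>t) (snd \<omega>t) y0 z0)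
                   (at (y0, z0) within {..<y0} \<times> UNIV)
             \<and> Liminf (at (y0, z0) within {y0<..} \<times> UNIV)
                   (\<lambda>(y, z). ereal (g (fst \<omega>t) (snd \<omega>t) y z))
                 \<ge> ereal (g (fst \<omega>t) (snd \<omega>t) y0 z0)"
    \<comment> \<open>(H5)\<close>
    and C: "C > 0" and \<alpha>: "0 < \<alpha>" "\<alpha> < 1"
    and f_nonneg: "\<And>\<omega> t. f \<omega> t \<ge> 0"
    and f_prog: "progressive T F f"
    and f_int: "integrable (M \<Otimes>\<^sub>M time_interval T) (\<lambda>(\<omega>, t). f \<omega> t)"
    and H5: "AE \<omega>t in M \<Otimes>\<^sub>M time_interval T.
       \<forall>y z. \<bar>g (fst \<omega>t) (snd \<omega>t) y z\<bar>
               \<le> f (fst \<omega>t) (snd \<omega>t) + C * (\<bar>y\<bar> + norm z powr \<alpha>)"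
  shows
    \<comment> \<open>(i)\<close>
    "(\<forall>n\<ge>1. (AE \<omega>t in M \<Otimes>\<^sub>M time_interval T.
                 \<forall>y z. gen_approx C \<alpha> g n (fst \<omega>t) (snd \<omega>t) y z \<noteq> \<infinity>
                     \<and> gen_approx C \<alpha> g n (fst \<omega>t) (snd \<omega>t) y z \<noteq> -\<infinity>)
             \<and> (\<forall>y z. progressive T F (\<lambda>\<omega> t. gen_approx C \<alpha> g n \<omega> t y z)))
     \<comment> \<open>(ii)\<close>
     \<and> (\<forall>n\<ge>1. \<forall>y z. AE \<omega>t in M \<Otimes>\<^sub>M time_interval T.
             gen_approx C \<alpha> g n (fst \<omega>t) (snd \<omega>t) y z
               \<le> gen_approx C \<alpha> g (Suc n) (fst \<omega>t) (snd \<omega>t) y z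
           \<and> gen_approx C \<alpha> g (Suc n) (fst \<omega>t) (snd \<omega>t) y z \<le> ereal (g (fst \<omega>t) (snd \<omega>t) y z)
           \<and> \<bar>gen_approx C \<alpha> g n (fst \<omega>t) (snd \<omega>t) y z\<bar>
               \<le> ereal (f (fst \<omega>t) (snd \<omega>t) + C * (\<bar>y\<bar> + norm z powr \<alpha>)))
     \<comment> \<open>(iii)\<close>
     \<and> (\<forall>n\<ge>1. \<forall>y1 y2 z1 z2. AE \<omega>t in M \<Otimes>\<^sub>M time_interval T.
             \<bar>gen_approx C \<alpha> g n (fst \<omega>t) (snd \<omega>t) y1 z1
                - gen_approx C \<alpha> g n (fst \<omega>t) (snd \<omega>t) y2 z2\<bar>
               \<le> ereal (real n * C * (\<bar>y1 - y2\<bar> + norm (z1 - z2) powr \<alpha>)))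
     \<comment> \<open>(iv)\<close>
     \<and> (\<forall>(yy :: nat \<Rightarrow> real) (zz :: nat \<Rightarrow> real ^ 'd) y0 z0.
           (\<forall>n. yy n < y0) \<and> yy \<longlonglongrightarrow> y0 \<and> zz \<longlonglongrightarrow> z0 \<longrightarrow>
           (AE \<omega>t in M \<Otimes>\<^sub>M time_interval T.
              (\<lambda>n. gen_approx C \<alpha> g n (fst \<omega>t) (snd \<omega>t) (yy n) (zz n))
                \<longlonglongrightarrow> ereal (g (fst \<omega>t) (snd \<omega>t) y0 z0)))"
proof -
  note regular = eventually_conj[OF H1a H5]
  have C0: "0 \<le> C" and \<alpha>1: "\<alpha> \<le> 1"
    using C \<alpha> by simp_all
  show ?thesis
    unfolding gen_approx_eq_inf_conv
    apply (intro conjI allI impI)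
    subgoal premises n_ge for n
      using regular
    proof eventually_elim
      case (elim \<omega>t)
      then show ?case
        using inf_conv_neq_PInf inf_conv_neq_MInf[OF _ C0 \<alpha>(1) \<alpha>1 n_ge] by blast
    qed
    subgoal for n y z
      by (rule progressive_inf_conv[OF gen])
    subgoal for n y z
      using regular
    proof eventually_elim
      case (elim \<omega>t)
      then show ?case
        using inf_conv_mono[OF C0, of n "Suc n" \<alpha> "g (fst \<omega>t) (snd \<omega>t)" y z] \<open>1 \<le> n\<close>
          inf_conv_le_left_continuous[of "g (fst \<omega>t) (snd \<omega>t)" y z \<alpha> C "Suc n"] \<alpha>(1)
          inf_conv_abs_le[of "g (fst \<omega>t) (snd \<omega>t)" y z "f (fst \<omega>t) (snd \<omega>t)" C \<alpha> n] C0 \<alpha>1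
        by auto
    qed
    subgoal for n y1 y2 z1 z2
      using regular by eventually_elim (intro inf_conv_abs_diff_le[OF _ C0 \<alpha>(1) \<alpha>1]; blast)
    subgoal for yy zz y0 z0
      using regular by eventually_elim (intro inf_conv_tendsto_from_left[OF _ _ _ C \<alpha>(1) \<alpha>1]; blast)
    done
qed

end
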